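(* Let $g$ be a function such that for every real $c\geq 1$, every finite graph $G$ with growth $f_G(r)\leq cr$ for all positive integers $r$ has $\operatorname{tw}(G)\leq g(c)$. Then $g(c)\in\Omega(c\log c)$ (as $c\to\infty$).
   Context: $\log$ is the natural logarithm. The growth of a finite graph $G$ is the function $f_G\colon\mathbb{N}\to\mathbb{N}$ where $f_G(r)$ is the maximum of $|V(H)|$ over all subgraphs $H$ of $G$ of radius at most $r$. $\operatorname{tw}(G)$ denotes the treewidth of $G$: the minimum, over tree-decompositions $(B_x: x\in V(T))$ of $G$ (bags indexed by a tree $T$, each edge in some bag, each vertex's bags forming a non-empty subtree), of the maximum bag size minus $1$. *)

theory Defs
  imports Complex_Main "HOL-Library.Landau_Symbols"
begin

text \<open>Finite simple graphs are represented by a vertex set V (of naturals; every finite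
graph is isomorphic to one of this form) and an edge set E of 2-element subsets of V.\<close>

definition graph :: "nat set \<Rightarrow> nat set set \<Rightarrow> bool" where
  "graph V E \<longleftrightarrow> finite V \<and> (\<forall>e\<in>E. \<exists>u v. e = {u, v} \<and> u \<in> V \<and> v \<in> V \<and> u \<noteq> v)"

definition walk :: "nat set set \<Rightarrow> nat list \<Rightarrow> bool" where
  "walk E xs \<longleftrightarrow> xs \<noteq> [] \<and> (\<forall>i. Suc i < length xs \<longrightarrow> {xs ! i, xs ! Suc i} \<in> E)"

definition dist_le :: "nat set \<Rightarrow> nat set set \<Rightarrow> nat \<Rightarrow> nat \<Rightarrow> nat \<Rightarrow> bool" where
  "dist_le V E u v k \<longleftrightarrow> (\<exists>xs. walk E xs \<and> set xs \<subseteq> V \<and> hd xs = u \<and> last xs = v \<and> length xs \<le> Suc k)"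

definition subgraph :: "nat set \<Rightarrow> nat set set \<Rightarrow> nat set \<Rightarrow> nat set set \<Rightarrow> bool" where
  "subgraph W F V E \<longleftrightarrow> W \<subseteq> V \<and> F \<subseteq> E \<and> (\<forall>e\<in>F. e \<subseteq> W)"

definition radius_le :: "nat set \<Rightarrow> nat set set \<Rightarrow> nat \<Rightarrow> bool" where
  "radius_le W F r \<longleftrightarrow> (\<exists>v\<in>W. \<forall>u\<in>W. dist_le W F v u r)"

definition growth :: "nat set \<Rightarrow> nat set set \<Rightarrow> nat \<Rightarrow> nat" where
  "growth V E r = Max (insert 0 {card W | W F. subgraph W F V E \<and> radius_le W F r})"

definition connected_on :: "nat set set \<Rightarrow> nat set \<Rightarrow> bool" where
  "connected_on E S \<longleftrightarrow> (\<forall>x\<in>S. \<forall>y\<in>S. \<exists>xs. walk E xs \<and> set xs \<subseteq> S \<and> hd xs = x \<and> last xs = y)"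

definition tree :: "nat set \<Rightarrow> nat set set \<Rightarrow> bool" where
  "tree VT ET \<longleftrightarrow> graph VT ET \<and> VT \<noteq> {} \<and> connected_on ET VT \<and> card ET = card VT - 1"

definition tree_decomposition ::
  "nat set \<Rightarrow> nat set set \<Rightarrow> nat set \<Rightarrow> nat set set \<Rightarrow> (nat \<Rightarrow> nat set) \<Rightarrow> bool" where
  "tree_decomposition V E VT ET B \<longleftrightarrow> tree VT ET
     \<and> (\<forall>x\<in>VT. B x \<subseteq> V)
     \<and> (\<forall>e\<in>E. \<exists>x\<in>VT. e \<subseteq> B x)
     \<and> (\<forall>v\<in>V. {x \<in> VT. v \<in> B x} \<noteq> {} \<and> connected_on ET {x \<in> VT. v \<in> B x})"

definition decomp_width :: "nat set \<Rightarrow> (nat \<Rightarrow> nat set) \<Rightarrow> int" where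
  "decomp_width VT B = int (Max ((\<lambda>x. card (B x)) ` VT)) - 1"

definition treewidth :: "nat set \<Rightarrow> nat set set \<Rightarrow> int" where
  "treewidth V E = Min {decomp_width VT B | VT ET B. tree_decomposition V E VT ET B}"

end

theory Submission
  imports Defs "HOL-Combinatorics.Permutations" "HOL-Real_Asymp.Real_Asymp"
begin

(* Take 32 permutations of a set of 5t vertices and join every v to its 32 images. For random
   permutations a fixed pair of disjoint t-sets A, B is missed by one permutation with probability
   at most (4/5)^t; since there are at most 4^(5t) pairs and 4^5 (4/5)^32 < 1, some choice yields a
   graph of maximum degree 64 in which any two disjoint t-sets are adjacent.  In a tree decomposition
   of such a graph some node x is balanced: every branch of the tree at x carries at most half of the
   vertices outside its bag.  Grouping the branches into two halves, neither of which can contain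
   t vertices without creating an edge between them, shows that the bag at x has more than t/2
   vertices.  Balls of radius r have at most 65^r vertices, so with t about c log_65 c / 5 the growth
   is at most c r: for r < log_65 c by the degree bound, and for larger r because the graph has at
   most c log_65 c vertices.  Hence g(c) > t/2 - 1, which is of order c log c. *)

section \<open>Adjacency and walks\<close>

definition edge_rel :: "nat set set \<Rightarrow> nat set \<Rightarrow> (nat \<times> nat) set" where
  "edge_rel E S = {(a, b). {a, b} \<in> E \<and> a \<in> S \<and> b \<in> S}"

definition neighbours :: "nat set set \<Rightarrow> nat \<Rightarrow> nat set" where
  "neighbours E u = {w. {u, w} \<in> E}"

lemma sym_edge_rel: "sym (edge_rel E S)"
  by (auto simp: edge_rel_def sym_def insert_commute)

lemma edge_rel_rtrancl_sym: "(a, b) \<in> (edge_rel E S)\<^sup>* \<Longrightarrow> (b, a) \<in> (edge_rel E S)\<^sup>*"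
  using sym_rtrancl[OF sym_edge_rel] by (auto dest: symD)

lemma edge_rel_mono: "E \<subseteq> E' \<Longrightarrow> S \<subseteq> S' \<Longrightarrow> edge_rel E S \<subseteq> edge_rel E' S'"
  by (auto simp: edge_rel_def)

lemma edge_rel_rtrancl_in: "(a, b) \<in> (edge_rel E S)\<^sup>* \<Longrightarrow> a \<in> S \<Longrightarrow> b \<in> S"
  by (induction rule: rtrancl_induct) (auto simp: edge_rel_def)

lemma walk_Cons_Cons: "walk E (x # y # zs) \<longleftrightarrow> {x, y} \<in> E \<and> walk E (y # zs)"
  unfolding walk_def by (auto simp: nth_Cons split: nat.splits)

lemma walk_relpow:
  "walk E xs \<Longrightarrow> set xs \<subseteq> S \<Longrightarrow> (hd xs, last xs) \<in> (edge_rel E S) ^^ (length xs - 1)"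
proof (induction xs rule: induct_list012)
  case (3 x y zs)
  have "{x, y} \<in> E" "walk E (y # zs)" using "3.prems"(1) by (simp_all add: walk_Cons_Cons)
  then have "(x, y) \<in> edge_rel E S" "(y, last (y # zs)) \<in> (edge_rel E S) ^^ length zs"
    using "3.IH"(2) "3.prems"(2) by (auto simp: edge_rel_def)
  then have "(x, last (y # zs)) \<in> (edge_rel E S) ^^ Suc (length zs)" by (rule relpow_Suc_I2)
  then show ?case by simp
qed (simp_all add: walk_def)

lemma connected_on_rtrancl:
  "connected_on E S \<Longrightarrow> x \<in> S \<Longrightarrow> y \<in> S \<Longrightarrow> (x, y) \<in> (edge_rel E S)\<^sup>*"
  unfolding connected_on_def using walk_relpow relpow_imp_rtrancl by metis

lemma graph_edgeD: "graph V E \<Longrightarrow> {a, b} \<in> E \<Longrightarrow> a \<noteq> b \<and> a \<in> V \<and> b \<in> V"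
  unfolding graph_def by (metis doubleton_eq_iff)

lemma graph_edge_subset: "graph V E \<Longrightarrow> e \<in> E \<Longrightarrow> e \<subseteq> V"
  unfolding graph_def by fastforce

lemma graph_finite_edges: "graph V E \<Longrightarrow> finite E"
  using graph_edge_subset unfolding graph_def by (metis Pow_iff finite_Pow_iff finite_subset subsetI)

section \<open>Growth of graphs of bounded degree\<close>

lemma relpow_mono: "(R :: ('a \<times> 'a) set) \<subseteq> S \<Longrightarrow> R ^^ n \<subseteq> S ^^ n"
  by (induction n) (simp_all add: relcomp_mono)

lemma card_reach_within_le:
  fixes R :: "('a \<times> 'a) set"
  assumes "\<And>u. finite (R `` {u})" and "\<And>u. card (R `` {u}) \<le> D"
  shows "finite {u. \<exists>j\<le>k. (v, u) \<in> R ^^ j} \<and> card {u. \<exists>j\<le>k. (v, u) \<in> R ^^ j} \<le> (D + 1) ^ k"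
proof (induction k)
  case 0
  have "{u. \<exists>j\<le>0. (v, u) \<in> R ^^ j} = {v}" by auto
  then show ?case by simp
next
  case (Suc k)
  let ?B = "\<lambda>k. {u. \<exists>j\<le>k. (v, u) \<in> R ^^ j}"
  have step: "?B (Suc k) \<subseteq> (\<Union>u\<in>?B k. insert u (R `` {u}))"
  proof
    fix w assume "w \<in> ?B (Suc k)"
    then obtain j where j: "j \<le> Suc k" "(v, w) \<in> R ^^ j" by blast
    show "w \<in> (\<Union>u\<in>?B k. insert u (R `` {u}))"
    proof (cases "j \<le> k")
      case False
      then obtain u where "(v, u) \<in> R ^^ k" "(u, w) \<in> R"
        using j by (auto simp: le_Suc_eq elim: relpow_Suc_E)
      then show ?thesis by blast
    qed (use j in blast)
  qed
  have fin: "finite (\<Union>u\<in>?B k. insert u (R `` {u}))" using Suc.IH assms(1) by blast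
  have "card (?B (Suc k)) \<le> card (\<Union>u\<in>?B k. insert u (R `` {u}))"
    by (rule card_mono[OF fin step])
  also have "\<dots> \<le> (\<Sum>u\<in>?B k. card (insert u (R `` {u})))"
    by (rule card_UN_le[OF conjunct1[OF Suc.IH]])
  also have "\<dots> \<le> (\<Sum>u\<in>?B k. D + 1)"
    using assms(2) by (intro sum_mono) (simp add: card_insert_if[OF assms(1)] le_SucI)
  also have "\<dots> = card (?B k) * (D + 1)" by simp
  also have "\<dots> \<le> (D + 1) ^ k * (D + 1)" using Suc.IH by (intro mult_right_mono) auto
  also have "\<dots> = (D + 1) ^ Suc k" by (simp add: mult.commute)
  finally show ?case using fin step finite_subset by blast
qed

lemma growth_le:
  assumes "\<And>W F. subgraph W F V E \<Longrightarrow> radius_le W F r \<Longrightarrow> card W \<le> N"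
  shows "growth V E r \<le> N"
proof -
  let ?S = "{card W | W F. subgraph W F V E \<and> radius_le W F r}"
  have "?S \<subseteq> {..N}" using assms by blast
  then have "finite (insert 0 ?S)" and "\<forall>k\<in>insert 0 ?S. k \<le> N"
    by (auto intro: finite_subset[OF _ finite_atMost])
  then show ?thesis unfolding growth_def by (simp add: Max_le_iff)
qed

lemma growth_le_card: "graph V E \<Longrightarrow> growth V E r \<le> card V"
  by (rule growth_le) (simp add: subgraph_def graph_def card_mono)

lemma growth_le_degree_power:
  assumes "graph V E" and "\<And>u. card (neighbours E u) \<le> D"
  shows "growth V E r \<le> (D + 1) ^ r"
proof (rule growth_le)
  fix W F assume sub: "subgraph W F V E" and "radius_le W F r"
  then obtain v where v: "\<And>u. u \<in> W \<Longrightarrow> dist_le W F v u r" unfolding radius_le_def by blast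
  let ?R = "edge_rel E V"
  have nb: "?R `` {u} \<subseteq> neighbours E u" for u by (auto simp: edge_rel_def neighbours_def)
  have "neighbours E u \<subseteq> V" for u using graph_edgeD[OF assms(1)] by (auto simp: neighbours_def)
  then have fin: "finite (neighbours E u)" for u using assms(1) unfolding graph_def by (meson finite_subset)
  have "finite (?R `` {u})" "card (?R `` {u}) \<le> D" for u
    using finite_subset[OF nb fin] le_trans[OF card_mono[OF fin nb] assms(2)] by auto
  then have reach: "finite {u. \<exists>j\<le>r. (v, u) \<in> ?R ^^ j}" "card {u. \<exists>j\<le>r. (v, u) \<in> ?R ^^ j} \<le> (D + 1) ^ r"
    using card_reach_within_le[of ?R D r v] by blast+
  have "W \<subseteq> {u. \<exists>j\<le>r. (v, u) \<in> ?R ^^ j}"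
  proof
    fix u assume "u \<in> W"
    then obtain xs where xs: "walk F xs" "set xs \<subseteq> W" "hd xs = v" "last xs = u" "length xs \<le> Suc r"
      using v unfolding dist_le_def by blast
    have "edge_rel F W \<subseteq> ?R" using sub by (intro edge_rel_mono) (auto simp: subgraph_def)
    then have "(v, u) \<in> ?R ^^ (length xs - 1)"
      using walk_relpow[OF xs(1,2)] xs(3,4) relpow_mono by blast
    moreover have "length xs - 1 \<le> r" using xs(5) by simp
    ultimately show "u \<in> {u. \<exists>j\<le>r. (v, u) \<in> ?R ^^ j}" by blast
  qed
  then show "card W \<le> (D + 1) ^ r" using reach card_mono le_trans by blast
qed

lemma growth_le_linear:
  fixes c :: real
  assumes "graph V E" "\<And>u. card (neighbours E u) \<le> D"
    and "real (card V) \<le> c * m" "real ((D + 1) ^ m) \<le> c" "r \<ge> 1"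
  shows "real (growth V E r) \<le> c * r"
proof -
  have "c \<ge> 0" using assms(4) by (rule order_trans[rotated]) simp
  show ?thesis
  proof (cases "m \<le> r")
    case True
    have "real (growth V E r) \<le> c * m" using growth_le_card[OF assms(1), of r] assms(3) by linarith
    also have "\<dots> \<le> c * r" using True \<open>c \<ge> 0\<close> by (intro mult_left_mono) auto
    finally show ?thesis .
  next
    case False
    have "growth V E r \<le> (D + 1) ^ r" by (rule growth_le_degree_power[OF assms(1,2)])
    also have "\<dots> \<le> (D + 1) ^ m" using False by (intro power_increasing) auto
    finally have "real (growth V E r) \<le> real ((D + 1) ^ m)" by (simp only: of_nat_le_iff)
    also have "\<dots> \<le> c" by (rule assms(4))
    also have "\<dots> \<le> c * r" using mult_left_mono[of 1 "real r" c] \<open>c \<ge> 0\<close> assms(5) by simp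
    finally show ?thesis .
  qed
qed

section \<open>Counting permutations\<close>

lemma card_permutes_value_le:
  assumes "finite S" "a \<in> S" "c \<in> S" "a \<notin> A"
  shows "card {p. p permutes S \<and> p a = c \<and> p ` A \<subseteq> D}
           \<le> card {q. q permutes (S - {a}) \<and> q ` A \<subseteq> transpose a c ` D}"
proof (rule card_inj_on_le)
  show "inj_on (\<lambda>p. transpose a c \<circ> p) {p. p permutes S \<and> p a = c \<and> p ` A \<subseteq> D}"
    by (rule inj_onI) (metis comp_assoc transpose_comp_involutory id_comp)
  show "finite {q. q permutes (S - {a}) \<and> q ` A \<subseteq> transpose a c ` D}"
    using finite_permutations[of "S - {a}"] assms(1) by auto
  show "(\<lambda>p. transpose a c \<circ> p) ` {p. p permutes S \<and> p a = c \<and> p ` A \<subseteq> D}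
          \<subseteq> {q. q permutes (S - {a}) \<and> q ` A \<subseteq> transpose a c ` D}"
  proof
    fix q assume "q \<in> (\<lambda>p. transpose a c \<circ> p) ` {p. p permutes S \<and> p a = c \<and> p ` A \<subseteq> D}"
    then obtain p where p: "p permutes S" "p a = c" "p ` A \<subseteq> D" and q: "q = transpose a c \<circ> p"
      by blast
    have perm: "q permutes S" using permutes_compose[OF p(1) permutes_swap_id[OF assms(2,3)]] q by simp
    have "q a = a" using p(2) q by simp
    then have "q permutes (S - {a})" by (intro permutes_superset[OF perm]) auto
    moreover have "q ` A \<subseteq> transpose a c ` D" using p(3) q by (auto simp: image_comp[symmetric])
    ultimately show "q \<in> {q. q permutes (S - {a}) \<and> q ` A \<subseteq> transpose a c ` D}" by simp
  qed
qed

lemma ratio_power_fact_step: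
  fixes k n m :: nat
  assumes "1 \<le> k" "k \<le> n"
  shows "k * (real (k - 1) / real (n - 1)) ^ m * fact (n - 1) \<le> (k / n) ^ Suc m * fact n"
proof -
  have "real (k - 1) / real (n - 1) \<le> k / n"
  proof (cases "n = 1")
    case False
    then show ?thesis using assms by (simp add: of_nat_diff field_simps)
  qed simp
  then have "k * (real (k - 1) / real (n - 1)) ^ m * fact (n - 1) \<le> k * (k / n) ^ m * fact (n - 1)"
    using assms by (intro mult_right_mono mult_left_mono power_mono) auto
  also have "\<dots> = (k / n) ^ Suc m * fact n"
    using assms fact_num_eq_if[of n, where 'a=real] by (simp add: field_simps)
  finally show ?thesis .
qed

lemma card_permutes_insert_le_sum:
  assumes "finite S" "finite C" "a \<notin> A"
  shows "card {p. p permutes S \<and> p ` insert a A \<subseteq> C}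
           \<le> (\<Sum>c\<in>C. card {p. p permutes S \<and> p a = c \<and> p ` A \<subseteq> C - {c}})"
proof -
  let ?X = "\<lambda>c. {p. p permutes S \<and> p a = c \<and> p ` A \<subseteq> C - {c}}"
  have cover: "{p. p permutes S \<and> p ` insert a A \<subseteq> C} \<subseteq> (\<Union>c\<in>C. ?X c)"
  proof
    fix p assume p: "p \<in> {p. p permutes S \<and> p ` insert a A \<subseteq> C}"
    then have "p ` A \<subseteq> C - {p a}"
      using assms(3) permutes_inj[of p S] by (auto dest: injD)
    then show "p \<in> (\<Union>c\<in>C. ?X c)" using p by auto
  qed
  have "finite (?X c)" for c
    using finite_permutations[OF assms(1)] by (rule rev_finite_subset) auto
  then have "card {p. p permutes S \<and> p ` insert a A \<subseteq> C} \<le> card (\<Union>c\<in>C. ?X c)"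
    using cover assms(2) by (intro card_mono) auto
  also have "\<dots> \<le> (\<Sum>c\<in>C. card (?X c))" using assms(2) by (rule card_UN_le)
  finally show ?thesis .
qed

lemma card_permutes_image_subset:
  assumes "finite S" "A \<subseteq> S" "C \<subseteq> S"
  shows "real (card {p. p permutes S \<and> p ` A \<subseteq> C}) \<le> (card C / card S) ^ card A * fact (card S)"
proof -
  have "finite A" using assms(1,2) finite_subset by blast
  then show ?thesis using assms
  proof (induction A arbitrary: S C rule: finite_induct)
    case empty
    then show ?case by (simp add: card_permutations)
  next
    case (insert a A S C)
    let ?n = "card S" and ?k = "card C"
    let ?X = "\<lambda>c. {p. p permutes S \<and> p a = c \<and> p ` A \<subseteq> C - {c}}"
    have aS: "a \<in> S" and fC: "finite C" using insert.prems finite_subset by auto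
    show ?case
    proof (cases "C = {}")
      case False
      have card_X: "real (card (?X c)) \<le> ((?k - 1) / (?n - 1)) ^ card A * fact (?n - 1)"
        if c: "c \<in> C" for c
      proof -
        have cS: "c \<in> S" using c insert.prems by auto
        have "transpose a c ` (C - {c}) \<subseteq> S - {a}"
          using aS cS insert.prems(3) by (auto simp: transpose_def)
        moreover have "A \<subseteq> S - {a}" "card (transpose a c ` (C - {c})) = ?k - 1"
          using insert.prems insert.hyps fC c by (auto simp: card_image)
        ultimately show ?thesis
          using card_permutes_value_le[OF insert.prems(1) aS cS insert.hyps(2), of "C - {c}"]
            insert.IH[of "S - {a}" "transpose a c ` (C - {c})"] insert.prems(1) aS c fC
          by (simp add: card_gt_0_iff)
      qed
      have "real (card {p. p permutes S \<and> p ` insert a A \<subseteq> C}) \<le> (\<Sum>c\<in>C. real (card (?X c)))"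
        using card_permutes_insert_le_sum[OF insert.prems(1) fC insert.hyps(2)]
        unfolding of_nat_sum[symmetric] of_nat_le_iff .
      also have "\<dots> \<le> (\<Sum>c\<in>C. ((?k - 1) / (?n - 1)) ^ card A * fact (?n - 1))"
        by (rule sum_mono) (rule card_X)
      also have "\<dots> = ?k * ((?k - 1) / (?n - 1)) ^ card A * fact (?n - 1)" by simp
      also have "\<dots> \<le> (real ?k / ?n) ^ Suc (card A) * fact ?n"
        using insert.prems False fC by (intro ratio_power_fact_step) (auto simp: Suc_le_eq card_gt_0_iff card_mono)
      also have "\<dots> = (real ?k / ?n) ^ card (insert a A) * fact ?n"
        using insert.hyps by simp
      finally show ?thesis .
    qed (simp add: insert.hyps)
  qed
qed

lemma card_permutes_avoiding:
  assumes "t \<ge> 1" "A \<subseteq> {0..<5*t}" "B \<subseteq> {0..<5*t}" "card A = t" "card B = t"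
  shows "real (card {p. p permutes {0..<5*t} \<and> p ` A \<subseteq> {0..<5*t} - B}) \<le> (4/5) ^ t * fact (5*t)"
proof -
  have ratio: "real (card ({0..<5*t} - B)) / real (card {0..<5*t}) = 4/5"
    using assms finite_subset[OF assms(3)] by (simp add: card_Diff_subset)
  have "real (card {p. p permutes {0..<5*t} \<and> p ` A \<subseteq> {0..<5*t} - B})
          \<le> (card ({0..<5*t} - B) / card {0..<5*t}) ^ card A * fact (card {0..<5*t})"
    using assms(2) by (intro card_permutes_image_subset) auto
  also have "\<dots> = (4/5) ^ t * fact (5*t)"
    unfolding ratio assms(4) by simp
  finally show ?thesis .
qed

lemma union_bound_inequality: "t \<ge> 1 \<Longrightarrow> 4 ^ (5*t) * ((4/5) ^ t * fact (5*t)) ^ 32 < (fact (5*t) ^ 32 :: real)"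
proof -
  assume "t \<ge> 1"
  have "(4::real) ^ (5*t) = 1024 ^ t" unfolding power_mult by simp
  then have "(4::real) ^ (5*t) * ((4/5) ^ t * fact (5*t)) ^ 32 = 1024 ^ t * ((4/5) ^ 32) ^ t * fact (5*t) ^ 32"
    by (simp add: power_mult_distrib mult.commute flip: power_mult)
  also have "\<dots> = (1024 * (4/5::real) ^ 32) ^ t * fact (5*t) ^ 32"
    by (simp only: power_mult_distrib)
  also have "\<dots> < 1 * fact (5*t) ^ 32"
  proof (rule mult_strict_right_mono)
    show "(1024 * (4/5::real) ^ 32) ^ t < 1"
      using \<open>t \<ge> 1\<close> by (subst power_less_one_iff) (simp_all add: power_divide)
  qed simp
  finally show ?thesis by simp
qed

lemma card_subset_pairs_le:
  assumes "finite S"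
  shows "card {(A, B). A \<subseteq> S \<and> B \<subseteq> S \<and> Q A B} \<le> 4 ^ card S"
proof -
  have "card {(A, B). A \<subseteq> S \<and> B \<subseteq> S \<and> Q A B} \<le> card (Pow S \<times> Pow S)"
    using assms by (intro card_mono) auto
  also have "\<dots> = 4 ^ card S"
    using assms by (simp add: card_cartesian_product card_Pow power_mult_distrib[symmetric])
  finally show ?thesis .
qed

lemma permutation_tuples_not_all_missing:
  fixes t :: nat
  defines "S \<equiv> {0..<5*t}"
  assumes "t \<ge> 1"
  shows "\<not> PiE {..<32::nat} (\<lambda>_. {p. p permutes S})
           \<subseteq> (\<Union>(A, B)\<in>{(A, B). A \<subseteq> S \<and> B \<subseteq> S \<and> card A = t \<and> card B = t}.
                 PiE {..<32::nat} (\<lambda>_. {p. p permutes S \<and> p ` A \<subseteq> S - B}))"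
    (is "\<not> _ \<subseteq> (\<Union>AB\<in>?Pairs. ?Bad AB)")
proof -
  have fin_Pairs: "finite ?Pairs"
    by (rule finite_subset[of _ "Pow S \<times> Pow S"]) (auto simp: S_def)
  have "card ?Pairs \<le> 4 ^ card S" by (rule card_subset_pairs_le) (simp add: S_def)
  then have "real (card ?Pairs) \<le> real (4 ^ (5*t))" unfolding S_def by (simp only: of_nat_le_iff card_atLeastLessThan diff_zero)
  then have card_Pairs: "real (card ?Pairs) \<le> 4 ^ (5*t)" by simp
  have fin_Bad: "finite (?Bad AB)" for AB
  proof (cases AB)
    case (Pair A B)
    show ?thesis unfolding Pair S_def
      by (auto intro!: finite_PiE intro: rev_finite_subset[OF finite_permutations[of "{0..<5*t}"]])
  qed
  have card_Bad: "real (card (?Bad AB)) \<le> ((4/5) ^ t * fact (5*t)) ^ 32" if "AB \<in> ?Pairs" for AB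
    using card_permutes_avoiding[OF assms(2), of "fst AB" "snd AB"] that
    unfolding S_def by (auto simp: card_PiE power_mono)
  have "card (\<Union>AB\<in>?Pairs. ?Bad AB) \<le> (\<Sum>AB\<in>?Pairs. card (?Bad AB))"
    by (rule card_UN_le[OF fin_Pairs])
  then have "real (card (\<Union>AB\<in>?Pairs. ?Bad AB)) \<le> (\<Sum>AB\<in>?Pairs. real (card (?Bad AB)))"
    unfolding of_nat_sum[symmetric] of_nat_le_iff .
  also have "\<dots> \<le> (\<Sum>AB\<in>?Pairs. ((4/5) ^ t * fact (5*t)) ^ 32)"
    by (rule sum_mono) (rule card_Bad)
  also have "\<dots> = card ?Pairs * ((4/5) ^ t * fact (5*t)) ^ 32" by simp
  also have "\<dots> \<le> 4 ^ (5*t) * ((4/5) ^ t * fact (5*t)) ^ 32"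
    using card_Pairs by (rule mult_right_mono) simp
  also have "\<dots> < fact (5*t) ^ 32" using union_bound_inequality[OF assms(2)] .
  also have "\<dots> = card (PiE {..<32::nat} (\<lambda>_. {p. p permutes S}))"
    unfolding S_def by (simp add: card_PiE card_permutations)
  finally have "card (\<Union>AB\<in>?Pairs. ?Bad AB) < card (PiE {..<32::nat} (\<lambda>_. {p. p permutes S}))"
    by (simp only: of_nat_less_iff)
  moreover have "finite (\<Union>AB\<in>?Pairs. ?Bad AB)" using fin_Pairs fin_Bad by blast
  ultimately show ?thesis by (meson card_mono leD)
qed

lemma permutations_meeting_all_pairs:
  fixes t :: nat
  assumes "t \<ge> 1"
  obtains P :: "nat \<Rightarrow> nat \<Rightarrow> nat"
  where "\<And>i. i < (32::nat) \<Longrightarrow> P i permutes {0..<5*t}"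
    and "\<And>A B. A \<subseteq> {0..<5*t} \<Longrightarrow> B \<subseteq> {0..<5*t} \<Longrightarrow> card A = t \<Longrightarrow> card B = t \<Longrightarrow>
           \<exists>i<(32::nat). P i ` A \<inter> B \<noteq> {}"
proof -
  define S where "S = {0..<5*t}"
  let ?Pairs = "{(A, B). A \<subseteq> S \<and> B \<subseteq> S \<and> card A = t \<and> card B = t}"
  let ?Bad = "\<lambda>(A, B). PiE {..<32::nat} (\<lambda>_. {p. p permutes S \<and> p ` A \<subseteq> S - B})"
  have "\<not> PiE {..<32::nat} (\<lambda>_. {p. p permutes S}) \<subseteq> (\<Union>AB\<in>?Pairs. ?Bad AB)"
    using permutation_tuples_not_all_missing[OF assms] unfolding S_def .
  then obtain P where P: "P \<in> PiE {..<32::nat} (\<lambda>_. {p. p permutes S})" "P \<notin> (\<Union>AB\<in>?Pairs. ?Bad AB)"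
    by blast
  show ?thesis
  proof
    show perm: "P i permutes {0..<5*t}" if "i < 32" for i
      using P(1) that unfolding S_def by auto
    fix A B assume AB: "A \<subseteq> {0..<5*t}" "B \<subseteq> {0..<5*t}" "card A = t" "card B = t"
    show "\<exists>i<32. P i ` A \<inter> B \<noteq> {}"
    proof (rule ccontr)
      assume "\<not> ?thesis"
      then have "P i ` A \<subseteq> S - B" if "i < 32" for i
        using permutes_image[OF perm[OF that]] AB(1) that unfolding S_def by blast
      then have "P \<in> ?Bad (A, B)" using P(1) by (auto simp: PiE_iff)
      moreover have "(A, B) \<in> ?Pairs" using AB unfolding S_def by auto
      ultimately show False using P(2) by blast
    qed
  qed
qed

section \<open>Expanders\<close>

definition large_sets_adjacent :: "nat set \<Rightarrow> nat set set \<Rightarrow> nat \<Rightarrow> bool" where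
  "large_sets_adjacent V E t \<longleftrightarrow> (\<forall>A B. A \<subseteq> V \<longrightarrow> B \<subseteq> V \<longrightarrow> A \<inter> B = {} \<longrightarrow>
     t \<le> card A \<longrightarrow> t \<le> card B \<longrightarrow> (\<exists>u\<in>A. \<exists>w\<in>B. {u, w} \<in> E))"

lemma large_sets_adjacentD:
  assumes "large_sets_adjacent V E t" "A \<subseteq> V" "B \<subseteq> V" "A \<inter> B = {}" "t \<le> card A" "t \<le> card B"
  obtains u w where "u \<in> A" "w \<in> B" "{u, w} \<in> E"
  using assms(1)[unfolded large_sets_adjacent_def, rule_format, OF assms(2-6)] that by blast

definition permutation_graph :: "(nat \<Rightarrow> nat \<Rightarrow> nat) \<Rightarrow> nat \<Rightarrow> nat set \<Rightarrow> nat set set" where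
  "permutation_graph P d V = {{v, P i v} | v i. i < d \<and> v \<in> V \<and> P i v \<noteq> v}"

lemma graph_permutation_graph:
  assumes "finite V" and perm: "\<And>i. i < d \<Longrightarrow> P i permutes V"
  shows "graph V (permutation_graph P d V)"
  unfolding graph_def
proof (intro conjI ballI)
  fix e assume "e \<in> permutation_graph P d V"
  then obtain v i where vi: "i < d" "v \<in> V" "P i v \<noteq> v" "e = {v, P i v}"
    unfolding permutation_graph_def by blast
  moreover have "P i v \<in> V" using permutes_in_image[OF perm[OF vi(1)]] vi(2) by simp
  ultimately show "\<exists>u w. e = {u, w} \<and> u \<in> V \<and> w \<in> V \<and> u \<noteq> w" by blast
qed (rule assms(1))

lemma card_neighbours_permutation_graph:
  assumes perm: "\<And>i. i < d \<Longrightarrow> P i permutes V"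
  shows "card (neighbours (permutation_graph P d V) u) \<le> 2 * d"
proof -
  let ?Out = "(\<lambda>i. P i u) ` {..<d}" and ?In = "(\<lambda>i. inv (P i) u) ` {..<d}"
  have "neighbours (permutation_graph P d V) u \<subseteq> ?Out \<union> ?In"
  proof
    fix w assume "w \<in> neighbours (permutation_graph P d V) u"
    then obtain v i where i: "i < d" and "{u, w} = {v, P i v}"
      unfolding neighbours_def permutation_graph_def mem_Collect_eq by meson
    then consider "u = v" "w = P i v" | "u = P i v" "w = v" by (auto simp: doubleton_eq_iff)
    then show "w \<in> ?Out \<union> ?In"
    proof cases
      case 2
      then have "w = inv (P i) u" using permutes_inverses(2)[OF perm[OF i]] by simp
      then show ?thesis using i by blast
    qed (use i in blast)
  qed
  then have "card (neighbours (permutation_graph P d V) u) \<le> card (?Out \<union> ?In)"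
    by (intro card_mono) simp_all
  also have "\<dots> \<le> card ?Out + card ?In" by (rule card_Un_le)
  also have "\<dots> \<le> d + d" using card_image_le[of "{..<d}"] by (intro add_mono) fastforce+
  finally show ?thesis by simp
qed

lemma large_sets_adjacent_permutation_graph:
  assumes meet: "\<And>A B. A \<subseteq> V \<Longrightarrow> B \<subseteq> V \<Longrightarrow> card A = t \<Longrightarrow> card B = t \<Longrightarrow> \<exists>i<d. P i ` A \<inter> B \<noteq> {}"
  shows "large_sets_adjacent V (permutation_graph P d V) t"
  unfolding large_sets_adjacent_def
proof (intro allI impI)
  fix A B assume AB: "A \<subseteq> V" "B \<subseteq> V" "A \<inter> B = {}" "t \<le> card A" "t \<le> card B"
  obtain A' where A': "A' \<subseteq> A" "card A' = t" using obtain_subset_with_card_n[OF AB(4)] by blast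
  obtain B' where B': "B' \<subseteq> B" "card B' = t" using obtain_subset_with_card_n[OF AB(5)] by blast
  obtain i a where i: "i < d" "a \<in> A'" "P i a \<in> B'"
    using meet[of A' B'] A' B' AB(1,2) by blast
  then have "a \<in> A" "P i a \<in> B" using A' B' by auto
  moreover have "{a, P i a} \<in> permutation_graph P d V"
    unfolding permutation_graph_def using i(1) \<open>a \<in> A\<close> \<open>P i a \<in> B\<close> AB(1,3)
    by (intro CollectI exI[of _ a] exI[of _ i]) auto
  ultimately show "\<exists>u\<in>A. \<exists>w\<in>B. {u, w} \<in> permutation_graph P d V" by blast
qed

lemma expander_graph_exists:
  assumes "t \<ge> 1"
  obtains V E where "graph V E" "card V = 5 * t" "\<And>u. card (neighbours E u) \<le> 64"
    "large_sets_adjacent V E t"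
proof -
  obtain P where perm: "\<And>i. i < (32::nat) \<Longrightarrow> P i permutes {0..<5*t}"
    and meet: "\<And>A B. A \<subseteq> {0..<5*t} \<Longrightarrow> B \<subseteq> {0..<5*t} \<Longrightarrow> card A = t \<Longrightarrow> card B = t \<Longrightarrow>
                 \<exists>i<32. P i ` A \<inter> B \<noteq> {}"
    using permutations_meeting_all_pairs[OF assms] by blast
  show ?thesis
  proof (rule that)
    show "graph {0..<5*t} (permutation_graph P 32 {0..<5*t})"
      using perm by (intro graph_permutation_graph) auto
    show "card (neighbours (permutation_graph P 32 {0..<5*t}) u) \<le> 64" for u
      using card_neighbours_permutation_graph[of 32 P "{0..<5*t}" u] perm by simp
    show "large_sets_adjacent {0..<5*t} (permutation_graph P 32 {0..<5*t}) t"
      using meet by (rule large_sets_adjacent_permutation_graph)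
  qed simp
qed

lemma subset_sum_halves:
  fixes w :: "'a \<Rightarrow> nat"
  assumes "finite I" and "\<And>i. i \<in> I \<Longrightarrow> w i \<le> M"
  shows "\<exists>J\<subseteq>I. 2 * sum w J \<le> sum w I + M \<and> sum w I \<le> 2 * sum w J + M"
  using assms
proof (induction I rule: finite_induct)
  case (insert i I)
  then obtain J where J: "J \<subseteq> I" "2 * sum w J \<le> sum w I + M" "sum w I \<le> 2 * sum w J + M"
    by auto
  have wi: "w i \<le> M" using insert.prems by simp
  have sI: "sum w (insert i I) = w i + sum w I" using insert.hyps by simp
  show ?case
  proof (cases "sum w I \<le> 2 * sum w J")
    case True
    then show ?thesis using J wi sI by (intro exI[of _ J]) auto
  next
    case False
    have "i \<notin> J" "finite J" using J(1) insert.hyps finite_subset by auto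
    then have "sum w (insert i J) = w i + sum w J" by simp
    then show ?thesis using J wi sI False by (intro exI[of _ "insert i J"]) auto
  qed
qed simp

lemma large_sets_adjacent_Union_split:
  assumes adj: "large_sets_adjacent V E t" and "J \<subseteq> I"
    and sub: "\<And>i. i \<in> I \<Longrightarrow> U i \<subseteq> V"
    and disj: "\<And>i j. i \<in> I \<Longrightarrow> j \<in> I \<Longrightarrow> i \<noteq> j \<Longrightarrow> U i \<inter> U j = {}"
    and nonadj: "\<And>i j u w. i \<in> I \<Longrightarrow> j \<in> I \<Longrightarrow> i \<noteq> j \<Longrightarrow> u \<in> U i \<Longrightarrow> w \<in> U j \<Longrightarrow> {u, w} \<notin> E"
  shows "card (\<Union>i\<in>J. U i) < t \<or> card (\<Union>i\<in>I - J. U i) < t"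
proof -
  let ?A = "\<Union>i\<in>J. U i" and ?B = "\<Union>i\<in>I - J. U i"
  have "?A \<subseteq> V" "?B \<subseteq> V" using \<open>J \<subseteq> I\<close> sub by blast+
  moreover have "?A \<inter> ?B = {}"
  proof -
    have "U i \<inter> U j = {}" if "i \<in> J" "j \<in> I - J" for i j
      using that \<open>J \<subseteq> I\<close> disj by (metis Diff_iff subsetD)
    then show ?thesis by blast
  qed
  moreover have "{u, w} \<notin> E" if uw: "u \<in> ?A" "w \<in> ?B" for u w
  proof -
    obtain i j where "i \<in> J" "j \<in> I - J" "u \<in> U i" "w \<in> U j" using uw by blast
    then show ?thesis using \<open>J \<subseteq> I\<close> nonadj[of i j u w] by blast
  qed
  ultimately show ?thesis by (meson large_sets_adjacentD[OF adj] not_le)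
qed

lemma card_Union_nonadjacent_less:
  assumes adj: "large_sets_adjacent V E t" and "finite V" and "finite I"
    and sub: "\<And>i. i \<in> I \<Longrightarrow> U i \<subseteq> V"
    and disj: "\<And>i j. i \<in> I \<Longrightarrow> j \<in> I \<Longrightarrow> i \<noteq> j \<Longrightarrow> U i \<inter> U j = {}"
    and nonadj: "\<And>i j u w. i \<in> I \<Longrightarrow> j \<in> I \<Longrightarrow> i \<noteq> j \<Longrightarrow> u \<in> U i \<Longrightarrow> w \<in> U j \<Longrightarrow> {u, w} \<notin> E"
    and small: "\<And>i. i \<in> I \<Longrightarrow> card (U i) \<le> M"
  shows "card (\<Union>i\<in>I. U i) < 2 * t + M"
proof -
  let ?s = "\<lambda>J. \<Sum>i\<in>J. card (U i)"
  have "\<exists>J\<subseteq>I. 2 * ?s J \<le> ?s I + M \<and> ?s I \<le> 2 * ?s J + M"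
    by (rule subset_sum_halves[OF \<open>finite I\<close>]) (rule small)
  then obtain J where J: "J \<subseteq> I" "2 * ?s J \<le> ?s I + M" "?s I \<le> 2 * ?s J + M"
    by (elim exE conjE) (rule that)
  have card_Union: "card (\<Union>i\<in>K. U i) = ?s K" if K: "K \<subseteq> I" for K
  proof (rule card_UN_disjoint)
    show "finite K" using K \<open>finite I\<close> by (rule finite_subset)
    show "\<forall>i\<in>K. finite (U i)" using K sub \<open>finite V\<close> finite_subset by blast
    show "\<forall>i\<in>K. \<forall>j\<in>K. i \<noteq> j \<longrightarrow> U i \<inter> U j = {}" using K disj by blast
  qed
  have split: "?s I = ?s (I - J) + ?s J"
    by (rule sum.subset_diff[OF J(1) \<open>finite I\<close>])
  from large_sets_adjacent_Union_split[OF adj J(1) sub disj nonadj] show ?thesis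
  proof
    assume "card (\<Union>i\<in>J. U i) < t"
    then show ?thesis using J(3) card_Union[OF J(1)] card_Union[of I] by simp
  next
    assume "card (\<Union>i\<in>I - J. U i) < t"
    then show ?thesis using J(2) card_Union[of "I - J"] card_Union[of I] split by auto
  qed
qed

section \<open>Trees and tree decompositions\<close>

lemma connected_parent_map:
  assumes r: "r \<in> V" and conn: "\<And>v. v \<in> V \<Longrightarrow> (r, v) \<in> (edge_rel E V)\<^sup>*"
  obtains parent d :: "nat \<Rightarrow> nat"
  where "\<And>v. v \<in> V \<Longrightarrow> v \<noteq> r \<Longrightarrow> (parent v, v) \<in> edge_rel E V \<and> d (parent v) < d v"
proof
  let ?R = "edge_rel E V"
  define d where "d v = (LEAST k. (r, v) \<in> ?R ^^ k)" for v
  define parent where "parent v = (SOME u. (r, u) \<in> ?R ^^ (d v - 1) \<and> (u, v) \<in> ?R)" for v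
  fix v assume v: "v \<in> V" "v \<noteq> r"
  have "(r, v) \<in> ?R ^^ d v"
    unfolding d_def using conn[OF v(1)] unfolding rtrancl_power by (rule LeastI_ex)
  moreover from this have "d v \<noteq> 0" using v(2) by (intro notI) simp
  ultimately have "(r, v) \<in> ?R ^^ Suc (d v - 1)" by simp
  then have "\<exists>u. (r, u) \<in> ?R ^^ (d v - 1) \<and> (u, v) \<in> ?R" by (auto elim: relpow_Suc_E)
  then have "(r, parent v) \<in> ?R ^^ (d v - 1) \<and> (parent v, v) \<in> ?R"
    unfolding parent_def by (rule someI_ex)
  moreover from this have "d (parent v) \<le> d v - 1" unfolding d_def by (blast intro: Least_le)
  ultimately show "(parent v, v) \<in> ?R \<and> d (parent v) < d v" using \<open>d v \<noteq> 0\<close> by auto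
qed

lemma connected_card_le_edges:
  assumes "graph V E" and r: "r \<in> V" and conn: "\<And>v. v \<in> V \<Longrightarrow> (r, v) \<in> (edge_rel E V)\<^sup>*"
  shows "card V \<le> card E + 1"
proof -
  obtain parent d :: "nat \<Rightarrow> nat"
    where parent: "\<And>v. v \<in> V \<Longrightarrow> v \<noteq> r \<Longrightarrow> (parent v, v) \<in> edge_rel E V \<and> d (parent v) < d v"
    using connected_parent_map[OF r conn] by blast
  have "inj_on (\<lambda>v. {parent v, v}) (V - {r})"
  proof (rule inj_onI, rule ccontr)
    fix v w assume v: "v \<in> V - {r}" and w: "w \<in> V - {r}" and "{parent v, v} = {parent w, w}" "v \<noteq> w"
    then have "parent v = w" "parent w = v" by (auto simp: doubleton_eq_iff)
    then show False using parent[of v] parent[of w] v w by auto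
  qed
  moreover have "(\<lambda>v. {parent v, v}) ` (V - {r}) \<subseteq> E"
    using parent unfolding edge_rel_def by auto
  ultimately have "card (V - {r}) \<le> card E"
    using card_inj_on_le graph_finite_edges[OF assms(1)] by blast
  then show ?thesis using r by simp
qed

lemma tree_edge_is_bridge:
  assumes T: "tree VT ET" and e: "{x, y} \<in> ET"
  shows "(x, y) \<notin> (edge_rel (ET - {{x, y}}) VT)\<^sup>*"
proof
  assume bridge: "(x, y) \<in> (edge_rel (ET - {{x, y}}) VT)\<^sup>*"
  let ?ET' = "ET - {{x, y}}"
  have g: "graph VT ET" using T unfolding tree_def by simp
  then have g': "graph VT ?ET'" unfolding graph_def by blast
  have xy: "x \<in> VT" using graph_edgeD[OF g e] by auto
  have "edge_rel ET VT \<subseteq> (edge_rel ?ET' VT)\<^sup>*"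
  proof
    fix ab assume ab: "ab \<in> edge_rel ET VT"
    show "ab \<in> (edge_rel ?ET' VT)\<^sup>*"
    proof (cases "ab \<in> {(x, y), (y, x)}")
      case True
      then show ?thesis using bridge edge_rel_rtrancl_sym by blast
    next
      case False
      then have "ab \<in> edge_rel ?ET' VT" using ab unfolding edge_rel_def by (auto simp: doubleton_eq_iff)
      then show ?thesis by blast
    qed
  qed
  then have "(edge_rel ET VT)\<^sup>* \<subseteq> (edge_rel ?ET' VT)\<^sup>*" by (rule rtrancl_subset_rtrancl)
  then have "card VT \<le> card ?ET' + 1"
    using connected_card_le_edges[OF g' xy] connected_on_rtrancl T xy unfolding tree_def by blast
  moreover have "card ?ET' = card ET - 1" using e graph_finite_edges[OF g] by simp
  moreover have "card ET = card VT - 1" using T unfolding tree_def by simp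
  moreover have "card VT \<ge> 2"
    using graph_edgeD[OF g e] g card_mono[of VT "{x, y}"] unfolding graph_def by auto
  ultimately show False by simp
qed

lemma edge_rel_remove_edge:
  "x \<notin> S \<or> y \<notin> S \<Longrightarrow> S \<subseteq> S' \<Longrightarrow> edge_rel E S \<subseteq> edge_rel (E - {{x, y}}) S'"
  by (auto simp: edge_rel_def doubleton_eq_iff)

lemma rtrancl_edge_rel_remove_edge:
  "x \<notin> S \<or> y \<notin> S \<Longrightarrow> S \<subseteq> S' \<Longrightarrow> (edge_rel E S)\<^sup>* \<subseteq> (edge_rel (E - {{x, y}}) S')\<^sup>*"
  by (intro rtrancl_mono edge_rel_remove_edge)

locale tree_decomp =
  fixes V :: "nat set" and E :: "nat set set" and VT :: "nat set" and ET :: "nat set set"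
    and B :: "nat \<Rightarrow> nat set"
  assumes graph: "graph V E" and decomposition: "tree_decomposition V E VT ET B"
begin

lemma tree: "tree VT ET"
  using decomposition unfolding tree_decomposition_def by simp

lemma tree_graph: "graph VT ET"
  using tree unfolding tree_def by simp

lemma finite_VT: "finite VT"
  using tree_graph unfolding graph_def by simp

lemma finite_V: "finite V"
  using graph unfolding graph_def by simp

lemma tree_edgeD: "{x, y} \<in> ET \<Longrightarrow> x \<noteq> y \<and> x \<in> VT \<and> y \<in> VT"
  using graph_edgeD[OF tree_graph] .

lemma tree_connected: "x \<in> VT \<Longrightarrow> y \<in> VT \<Longrightarrow> (x, y) \<in> (edge_rel ET VT)\<^sup>*"
  using tree connected_on_rtrancl unfolding tree_def by blast

lemma bag_subset: "x \<in> VT \<Longrightarrow> B x \<subseteq> V"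
  using decomposition unfolding tree_decomposition_def by blast

lemma edge_in_bag: "e \<in> E \<Longrightarrow> \<exists>x\<in>VT. e \<subseteq> B x"
  using decomposition unfolding tree_decomposition_def by blast

lemma vertex_in_bag: "v \<in> V \<Longrightarrow> \<exists>x\<in>VT. v \<in> B x"
  using decomposition unfolding tree_decomposition_def by blast

lemma bags_connected:
  assumes "v \<in> V" "z \<in> VT" "v \<in> B z" "z' \<in> VT" "v \<in> B z'"
  shows "(z, z') \<in> (edge_rel ET {x \<in> VT. v \<in> B x})\<^sup>*"
proof -
  have "connected_on ET {x \<in> VT. v \<in> B x}"
    using decomposition assms(1) unfolding tree_decomposition_def by blast
  then show ?thesis using assms connected_on_rtrancl by blast
qed

lemma bag_card_le_width: "x \<in> VT \<Longrightarrow> int (card (B x)) \<le> decomp_width VT B + 1"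
  unfolding decomp_width_def using finite_VT by simp

definition branch :: "nat \<Rightarrow> nat \<Rightarrow> nat set" where
  "branch x y = {z. (y, z) \<in> (edge_rel ET (VT - {x}))\<^sup>*}"

definition branch_vertices :: "nat \<Rightarrow> nat \<Rightarrow> nat set" where
  "branch_vertices x y = {v \<in> V - B x. \<exists>z\<in>branch x y. v \<in> B z}"

lemma in_branch: "y \<in> branch x y"
  unfolding branch_def by simp

lemma branch_subset: "{x, y} \<in> ET \<Longrightarrow> branch x y \<subseteq> VT - {x}"
  unfolding branch_def using tree_edgeD edge_rel_rtrancl_in by blast

lemma branch_trans: "z \<in> branch x y \<Longrightarrow> (z, z') \<in> (edge_rel ET (VT - {x}))\<^sup>* \<Longrightarrow> z' \<in> branch x y"
  unfolding branch_def by simp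

lemma branch_cover:
  assumes x: "x \<in> VT" and z: "z \<in> VT" "z \<noteq> x"
  shows "\<exists>y. {x, y} \<in> ET \<and> z \<in> branch x y"
proof -
  have "(x, z) \<in> (edge_rel ET VT)\<^sup>*" using tree_connected x z by blast
  then have "z = x \<or> (\<exists>y. {x, y} \<in> ET \<and> z \<in> branch x y)"
  proof (induction rule: rtrancl_induct)
    case (step w u)
    then have wu: "{w, u} \<in> ET" "w \<in> VT" "u \<in> VT" unfolding edge_rel_def by auto
    show ?case
    proof (cases "w = x")
      case True
      then show ?thesis using wu in_branch by blast
    next
      case False
      then obtain y where y: "{x, y} \<in> ET" "w \<in> branch x y" using step.IH by blast
      have "u = x \<or> (w, u) \<in> edge_rel ET (VT - {x})" using wu False unfolding edge_rel_def by auto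
      then show ?thesis using y branch_trans by blast
    qed
  qed simp
  then show ?thesis using z by blast
qed

lemma branch_path_avoids_edge:
  assumes "{x, y} \<in> ET" "z \<in> branch x y"
  shows "(z, y) \<in> (edge_rel (ET - {{x, y}}) VT)\<^sup>*"
  using assms rtrancl_edge_rel_remove_edge[of x "VT - {x}" y VT ET] edge_rel_rtrancl_sym
  unfolding branch_def by blast

lemma branch_disjoint:
  assumes e: "{x, y} \<in> ET" and e': "{x, y'} \<in> ET" and "y \<noteq> y'"
  shows "branch x y \<inter> branch x y' = {}"
proof (rule ccontr)
  assume "branch x y \<inter> branch x y' \<noteq> {}"
  then obtain z where "z \<in> branch x y" "z \<in> branch x y'" by blast
  then have "(y', z) \<in> (edge_rel (ET - {{x, y}}) VT)\<^sup>*" "(z, y) \<in> (edge_rel (ET - {{x, y}}) VT)\<^sup>*"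
    using branch_path_avoids_edge[OF e] rtrancl_edge_rel_remove_edge[of x "VT - {x}" y VT ET]
    unfolding branch_def by blast+
  moreover have "(x, y') \<in> edge_rel (ET - {{x, y}}) VT"
    using e' tree_edgeD[OF e'] \<open>y \<noteq> y'\<close> unfolding edge_rel_def by (auto simp: doubleton_eq_iff)
  ultimately have "(x, y) \<in> (edge_rel (ET - {{x, y}}) VT)\<^sup>*"
    by (meson converse_rtrancl_into_rtrancl rtrancl_trans)
  then show False using tree_edge_is_bridge[OF tree e] by blast
qed

lemma branch_opposite_disjoint:
  assumes e: "{x, y} \<in> ET"
  shows "branch x y \<inter> branch y x = {}"
proof (rule ccontr)
  assume "branch x y \<inter> branch y x \<noteq> {}"
  then obtain z where z: "z \<in> branch x y" "z \<in> branch y x" by blast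
  have e': "{y, x} \<in> ET" using e by (simp add: insert_commute)
  have "(z, y) \<in> (edge_rel (ET - {{x, y}}) VT)\<^sup>*" using branch_path_avoids_edge[OF e z(1)] .
  moreover have "(z, x) \<in> (edge_rel (ET - {{x, y}}) VT)\<^sup>*"
    using branch_path_avoids_edge[OF e' z(2)] by (simp add: insert_commute)
  ultimately have "(x, y) \<in> (edge_rel (ET - {{x, y}}) VT)\<^sup>*"
    by (meson edge_rel_rtrancl_sym rtrancl_trans)
  then show False using tree_edge_is_bridge[OF tree e] by blast
qed

lemma branch_psubset:
  assumes e: "{x, y} \<in> ET" and e': "{y, y'} \<in> ET" and "y' \<noteq> x"
  shows "branch y y' \<subset> branch x y"
proof -
  have x_notin: "x \<notin> branch y y'"
    using branch_disjoint[of y x y'] e e' \<open>y' \<noteq> x\<close> in_branch by (auto simp: insert_commute)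
  have "(y, z) \<in> (edge_rel ET (VT - {x}))\<^sup>*" if "z \<in> branch y y'" for z
  proof -
    have "(y', z) \<in> (edge_rel ET (VT - {y}))\<^sup>*" using that unfolding branch_def by simp
    then show ?thesis
    proof (induction rule: rtrancl_induct)
      case base
      have "(y, y') \<in> edge_rel ET (VT - {x})"
        using e' tree_edgeD[OF e'] tree_edgeD[OF e] \<open>y' \<noteq> x\<close> unfolding edge_rel_def by auto
      then show ?case by simp
    next
      case (step w u)
      then have "w \<in> branch y y'" "u \<in> branch y y'" unfolding branch_def by auto
      then have "(w, u) \<in> edge_rel ET (VT - {x})"
        using step.hyps(2) x_notin unfolding edge_rel_def by auto
      with step.IH show ?case by (rule rtrancl_into_rtrancl)
    qed
  qed
  then have "branch y y' \<subseteq> branch x y" unfolding branch_def by blast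
  moreover have "y \<in> branch x y - branch y y'" using in_branch branch_subset[OF e'] by blast
  ultimately show ?thesis by blast
qed

lemma branch_vertices_subset: "branch_vertices x y \<subseteq> V"
  unfolding branch_vertices_def by auto

lemma bag_in_branch:
  assumes e: "{x, y} \<in> ET" and v: "v \<in> branch_vertices x y" and z': "z' \<in> VT" "v \<in> B z'"
  shows "z' \<in> branch x y"
proof -
  obtain z where z: "z \<in> branch x y" "v \<in> B z" and v': "v \<in> V" "v \<notin> B x"
    using v unfolding branch_vertices_def by auto
  have "z \<in> VT" using branch_subset[OF e] z(1) by blast
  then have "(z, z') \<in> (edge_rel ET {w \<in> VT. v \<in> B w})\<^sup>*" using bags_connected v' z z' by blast
  moreover have "edge_rel ET {w \<in> VT. v \<in> B w} \<subseteq> edge_rel ET (VT - {x})"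
    using v' by (intro edge_rel_mono) auto
  ultimately show ?thesis using z(1) branch_trans rtrancl_mono by blast
qed

lemma branch_vertices_cover:
  assumes x: "x \<in> VT" and v: "v \<in> V" "v \<notin> B x"
  shows "\<exists>y. {x, y} \<in> ET \<and> v \<in> branch_vertices x y"
proof -
  obtain z where z: "z \<in> VT" "v \<in> B z" using vertex_in_bag[OF v(1)] by blast
  then obtain y where "{x, y} \<in> ET" "z \<in> branch x y" using branch_cover[OF x z(1)] v(2) by blast
  then show ?thesis using z v unfolding branch_vertices_def by blast
qed

lemma branch_vertices_disjoint:
  assumes e: "{x, y} \<in> ET" and e': "{x, y'} \<in> ET" and "y \<noteq> y'"
  shows "branch_vertices x y \<inter> branch_vertices x y' = {}"
proof (rule ccontr)
  assume "branch_vertices x y \<inter> branch_vertices x y' \<noteq> {}"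
  then obtain v where v: "v \<in> branch_vertices x y" "v \<in> branch_vertices x y'" by blast
  then obtain z where z: "z \<in> branch x y" "v \<in> B z" unfolding branch_vertices_def by auto
  then have "z \<in> branch x y'" using bag_in_branch[OF e' v(2)] branch_subset[OF e] by blast
  then show False using branch_disjoint[OF e e' \<open>y \<noteq> y'\<close>] z(1) by blast
qed

lemma branch_vertices_opposite_disjoint:
  assumes e: "{x, y} \<in> ET"
  shows "branch_vertices x y \<inter> branch_vertices y x = {}"
proof (rule ccontr)
  assume "branch_vertices x y \<inter> branch_vertices y x \<noteq> {}"
  then obtain v where v: "v \<in> branch_vertices x y" "v \<in> branch_vertices y x" by blast
  then obtain z where z: "z \<in> branch y x" "v \<in> B z" unfolding branch_vertices_def by auto
  have "{y, x} \<in> ET" using e by (simp add: insert_commute)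
  then have "z \<in> VT" using branch_subset z(1) by blast
  then have "z \<in> branch x y" using bag_in_branch[OF e v(1)] z(2) by blast
  then show False using branch_opposite_disjoint[OF e] z(1) by blast
qed

lemma branch_vertices_edge_closed:
  assumes e: "{x, y} \<in> ET" and u: "u \<in> branch_vertices x y" and uw: "{u, w} \<in> E"
    and w: "w \<in> V" "w \<notin> B x"
  shows "w \<in> branch_vertices x y"
proof -
  obtain z where z: "z \<in> VT" "{u, w} \<subseteq> B z" using edge_in_bag[OF uw] by blast
  then have "z \<in> branch x y" using bag_in_branch[OF e u] by blast
  then show ?thesis using z w unfolding branch_vertices_def by blast
qed

lemma card_branch_vertices_opposite:
  assumes "{x, y} \<in> ET"
  shows "card (branch_vertices x y) + card (branch_vertices y x) \<le> card V"
proof -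
  have "finite (branch_vertices x y)" "finite (branch_vertices y x)"
    using branch_vertices_subset finite_V finite_subset by blast+
  then have "card (branch_vertices x y) + card (branch_vertices y x)
               = card (branch_vertices x y \<union> branch_vertices y x)"
    using branch_vertices_opposite_disjoint[OF assms] by (simp add: card_Un_disjoint)
  also have "\<dots> \<le> card V" using branch_vertices_subset finite_V by (intro card_mono) auto
  finally show ?thesis .
qed

(* Among the tree edges (x, y) whose branch at y holds more than half of the vertices, one with
   the smallest branch ends in a balanced node. *)
lemma balanced_node: "\<exists>x\<in>VT. \<forall>y. {x, y} \<in> ET \<longrightarrow> 2 * card (branch_vertices x y) \<le> card V"
proof (cases "\<exists>x y. {x, y} \<in> ET \<and> card V < 2 * card (branch_vertices x y)")
  case False
  then show ?thesis using tree unfolding tree_def by (auto simp: not_less)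
next
  case True
  let ?heavy = "\<lambda>(x, y). {x, y} \<in> ET \<and> card V < 2 * card (branch_vertices x y)"
  obtain x0 y0 where "?heavy (x0, y0)" using True by auto
  then obtain p where heavy_p: "?heavy p"
    and minimal_p: "\<forall>q. ?heavy q \<longrightarrow> card (branch (fst p) (snd p)) \<le> card (branch (fst q) (snd q))"
    using ex_has_least_nat[of ?heavy "(x0, y0)" "\<lambda>q. card (branch (fst q) (snd q))"] by blast
  obtain x y where p: "p = (x, y)" by fastforce
  have e: "{x, y} \<in> ET" and heavy: "card V < 2 * card (branch_vertices x y)"
    using heavy_p unfolding p by auto
  have minimal: "card (branch x y) \<le> card (branch x' y')" if "?heavy (x', y')" for x' y'
    using minimal_p that unfolding p by fastforce
  have "2 * card (branch_vertices y y') \<le> card V" if e': "{y, y'} \<in> ET" for y'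
  proof (cases "y' = x")
    case True
    then show ?thesis using card_branch_vertices_opposite[OF e] heavy by simp
  next
    case False
    have "finite (branch x y)" using branch_subset[OF e] finite_VT finite_subset by blast
    then have "card (branch y y') < card (branch x y)"
      using branch_psubset[OF e e' False] by (rule psubset_card_mono)
    then show ?thesis using minimal[of y y'] e' by fastforce
  qed
  then show ?thesis using tree_edgeD[OF e] by blast
qed

lemma exists_large_bag:
  assumes "large_sets_adjacent V E t"
  shows "\<exists>x\<in>VT. card V < 2 * t + card V div 2 + card (B x)"
proof -
  obtain x where x: "x \<in> VT"
    and balanced: "\<And>y. {x, y} \<in> ET \<Longrightarrow> 2 * card (branch_vertices x y) \<le> card V"
    using balanced_node by blast
  let ?I = "{y. {x, y} \<in> ET}"
  have "finite ?I" using tree_edgeD finite_VT by (auto intro: finite_subset)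
  have "V - B x = (\<Union>y\<in>?I. branch_vertices x y)"
    using branch_vertices_cover[OF x] unfolding branch_vertices_def by blast
  moreover have "card (\<Union>y\<in>?I. branch_vertices x y) < 2 * t + card V div 2"
  proof (rule card_Union_nonadjacent_less[OF assms finite_V \<open>finite ?I\<close> branch_vertices_subset])
    fix y y' assume y: "y \<in> ?I" "y' \<in> ?I" "y \<noteq> y'"
    then show "branch_vertices x y \<inter> branch_vertices x y' = {}"
      by (simp add: branch_vertices_disjoint)
    fix u w assume "u \<in> branch_vertices x y" "w \<in> branch_vertices x y'"
    then show "{u, w} \<notin> E"
      using branch_vertices_edge_closed branch_vertices_disjoint y unfolding branch_vertices_def
      by blast
  next
    fix y assume "y \<in> ?I"
    then have "2 * card (branch_vertices x y) \<le> card V" using balanced by simp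
    then show "card (branch_vertices x y) \<le> card V div 2" by presburger
  qed
  moreover have "card V \<le> card (V - B x) + card (B x)"
    using card_mono[OF _ Un_upper1, of "V - B x" "B x"] card_Un_le[of "V - B x" "B x"] finite_V
    by (simp add: Un_absorb2 bag_subset[OF x])
  ultimately show ?thesis using x by (intro bexI[of _ x]) simp_all
qed

end

section \<open>Treewidth of expanders\<close>

lemma trivial_tree_decomposition: "graph V E \<Longrightarrow> tree_decomposition V E {0} {} (\<lambda>_. V)"
  unfolding tree_decomposition_def tree_def connected_on_def walk_def graph_def
  by (auto intro!: exI[of _ "[0]"])

lemma treewidth_attained:
  assumes "graph V E"
  obtains VT ET B where "tree_decomposition V E VT ET B" "treewidth V E = decomp_width VT B"
proof -
  let ?W = "{decomp_width VT B | VT ET B. tree_decomposition V E VT ET B}"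
  have "?W \<subseteq> {-1 .. int (card V)}"
  proof
    fix k assume "k \<in> ?W"
    then obtain VT ET B where "tree_decomposition V E VT ET B" and k: "k = decomp_width VT B"
      by blast
    then interpret tree_decomp V E VT ET B using assms by unfold_locales
    have "card (B x) \<le> card V" if "x \<in> VT" for x
      using bag_subset[OF that] finite_V by (rule card_mono[rotated])
    then have "Max ((\<lambda>x. card (B x)) ` VT) \<le> card V"
      using finite_VT tree unfolding tree_def by (simp add: Max_le_iff)
    then show "k \<in> {-1 .. int (card V)}" unfolding k decomp_width_def by auto
  qed
  then have "finite ?W" by (rule finite_subset) simp
  moreover have "?W \<noteq> {}" using trivial_tree_decomposition[OF assms] by blast
  ultimately have "Min ?W \<in> ?W" by (rule Min_in)
  then show ?thesis using that unfolding treewidth_def by auto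
qed

lemma treewidth_lower_bound:
  assumes "graph V E" and "large_sets_adjacent V E t" and "card V = 5 * t"
  shows "int t < 2 * (treewidth V E + 1)"
proof -
  obtain VT ET B where td: "tree_decomposition V E VT ET B" and tw: "treewidth V E = decomp_width VT B"
    using treewidth_attained[OF assms(1)] .
  interpret tree_decomp V E VT ET B using assms(1) td by unfold_locales
  obtain x where x: "x \<in> VT" and "card V < 2 * t + card V div 2 + card (B x)"
    using exists_large_bag[OF assms(2)] by blast
  then have "int t < 2 * int (card (B x))" using assms(3) by linarith
  also have "\<dots> \<le> 2 * (treewidth V E + 1)" using bag_card_le_width[OF x] unfolding tw by simp
  finally show ?thesis .
qed

lemma expander_of_linear_growth:
  fixes c :: real
  assumes "c \<ge> 65"
  obtains V E t where "graph V E" "card V = 5 * t" "large_sets_adjacent V E t"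
    "\<And>r. r \<ge> 1 \<Longrightarrow> real (growth V E r) \<le> c * r"
    "(c - 1) * (log 65 c - 1) < 5 * t + 5"
proof -
  define m where "m = nat \<lfloor>log 65 c\<rfloor>"
  define t where "t = nat \<lfloor>c\<rfloor> * m div 5"
  have "log 65 c \<ge> 1" using assms by simp
  then have m: "real m \<le> log 65 c" "log 65 c - 1 < m" "m \<ge> 1" unfolding m_def by linarith+
  have "real ((64 + 1) ^ m) \<le> c"
    using m(1) assms by (simp add: le_log_iff powr_realpow flip: powr_realpow)
  have c_floor: "real (nat \<lfloor>c\<rfloor>) \<le> c" "c - 1 < real (nat \<lfloor>c\<rfloor>)" "nat \<lfloor>c\<rfloor> \<ge> 65"
    using assms by linarith+
  then have "nat \<lfloor>c\<rfloor> * m \<ge> 65" using m(3) by (metis le_trans mult_le_mono2 nat_mult_1_right)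
  then have "t \<ge> 1" unfolding t_def by simp
  obtain V E where G: "graph V E" "card V = 5 * t" "\<And>u. card (neighbours E u) \<le> 64"
    "large_sets_adjacent V E t"
    using expander_graph_exists[OF \<open>t \<ge> 1\<close>] by blast
  have "card V \<le> nat \<lfloor>c\<rfloor> * m" using G(2) unfolding t_def by simp
  then have "real (card V) \<le> real (nat \<lfloor>c\<rfloor> * m)" by (simp only: of_nat_le_iff)
  also have "\<dots> = real (nat \<lfloor>c\<rfloor>) * m" by simp
  also have "\<dots> \<le> c * m" using c_floor by (intro mult_right_mono) auto
  finally have card_V: "real (card V) \<le> c * m" .
  have "(c - 1) * (log 65 c - 1) \<le> real (nat \<lfloor>c\<rfloor>) * m"
    using c_floor m assms by (intro mult_mono) auto
  also have "\<dots> = real (nat \<lfloor>c\<rfloor> * m)" by simp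
  also have "\<dots> < real (5 * t + 5)" unfolding of_nat_less_iff t_def by simp
  finally have "(c - 1) * (log 65 c - 1) < 5 * t + 5" by simp
  with G(1,2,4) growth_le_linear[OF G(1,3) card_V \<open>real ((64 + 1) ^ m) \<le> c\<close>] show ?thesis
    by (rule that)
qed

lemma linear_growth_graph_with_large_treewidth:
  fixes c :: real
  assumes "c \<ge> 65"
  obtains V E where "graph V E" "\<And>r. r \<ge> 1 \<Longrightarrow> real (growth V E r) \<le> c * r"
    "(c - 1) * (log 65 c - 1) - 15 < 10 * real_of_int (treewidth V E)"
proof -
  obtain V E t where G: "graph V E" "card V = 5 * t" "large_sets_adjacent V E t"
    and growth: "\<And>r. r \<ge> 1 \<Longrightarrow> real (growth V E r) \<le> c * r"
    and size: "(c - 1) * (log 65 c - 1) < 5 * t + 5"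
    using expander_of_linear_growth[OF assms] by blast
  have "real_of_int (int t) < real_of_int (2 * (treewidth V E + 1))"
    using treewidth_lower_bound[OF G(1,3,2)] by (simp only: of_int_less_iff)
  then have "(c - 1) * (log 65 c - 1) - 15 < 10 * real_of_int (treewidth V E)" using size by simp
  with G(1) growth show ?thesis by (rule that)
qed

theorem theorem8:
  fixes g :: "real \<Rightarrow> real"
  assumes "\<forall>c::real. c \<ge> 1 \<longrightarrow> (\<forall>V E. graph V E \<longrightarrow>
             (\<forall>r::nat. r \<ge> 1 \<longrightarrow> real (growth V E r) \<le> c * real r) \<longrightarrow>
             real_of_int (treewidth V E) \<le> g c)"
  shows "g \<in> \<Omega>(\<lambda>c. c * ln c)"
proof -
  define h where "h c = ((c - 1) * (log 65 c - 1) - 15) / 10" for c :: real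
  have "eventually (\<lambda>c. h c \<le> g c) at_top"
    using eventually_ge_at_top[of "65::real"]
  proof eventually_elim
    case (elim c)
    obtain V E where "graph V E" "\<And>r. r \<ge> 1 \<Longrightarrow> real (growth V E r) \<le> c * r"
      and large: "(c - 1) * (log 65 c - 1) - 15 < 10 * real_of_int (treewidth V E)"
      using linear_growth_graph_with_large_treewidth[OF elim] by blast
    then have "treewidth V E \<le> g c" using assms elim by auto
    then have "(c - 1) * (log 65 c - 1) - 15 \<le> 10 * g c" using large by linarith
    then show ?case unfolding h_def by simp
  qed
  moreover have "eventually (\<lambda>c. 0 \<le> h c) at_top" unfolding h_def log_def by real_asymp
  ultimately have "h \<in> O(g)"
    by (intro landau_o.big_mono) (auto elim: eventually_elim2)
  moreover have "(\<lambda>c. c * ln c) \<in> O(h)" unfolding h_def log_def by real_asymp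
  ultimately show ?thesis by (simp add: bigomega_iff_bigo landau_o.big_trans)
qed

end
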